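(* Let $G$ be a finite simple connected graph that is simply connected, and let $v_0\in V(G)$. Then the cluster graph $\mathcal{C}(G)$ of $G$ with respect to $v_0$ is a tree.
   Context: For $i\ge 0$ let $S^i=\{v\in V(G): d(v_0,v)=i\}$ (graph distance). The clusters of $G$ with respect to $v_0$ are the vertex sets of the connected components of the induced subgraphs $G[S^i]$, $i\ge 0$; i.e. two vertices $u,v\in S^i$ are in the same cluster iff there is a path from $u$ to $v$ all of whose vertices lie in $S^i$. The cluster graph $\mathcal{C}(G)$ has the clusters as vertices, and two distinct clusters $C,C'$ are adjacent iff there exist $v\in C$, $v'\in C'$ with $vv'\in E(G)$. A loop in $G$ is a finite sequence of vertices $(v_0,\dots,v_k)$ with, for each $i<k$, $v_iv_{i+1}\in E(G)$ or $v_i=v_{i+1}$. Two loops $(v_0,\dots,v_{i-1},v_i,v_{i+1},\dots,v_k)$ and $(v_0,\dots,v_{i-1},v_{i+1},\dots,v_k)$ are related by an elementary homotopy (in either direction) if $v_i=v_{i+1}$, or $v_{i-1}=v_{i+1}$, or $v_{i-1}v_{i+1}\in E(G)$. A loop is contractible if it can be reduced to a single vertex by a finite sequence of elementary homotopies; $G$ is simply connected if every loop is contractible. *)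

theory Defs
  imports Main
begin

definition simple_graph :: "'a set \<Rightarrow> ('a \<Rightarrow> 'a \<Rightarrow> bool) \<Rightarrow> bool" where
  "simple_graph V E \<longleftrightarrow> (\<forall>u v. E u v \<longrightarrow> u \<in> V \<and> v \<in> V) \<and>
     (\<forall>u v. E u v \<longrightarrow> E v u) \<and> (\<forall>v. \<not> E v v)"

definition finite_simple_graph :: "'a set \<Rightarrow> ('a \<Rightarrow> 'a \<Rightarrow> bool) \<Rightarrow> bool" where
  "finite_simple_graph V E \<longleftrightarrow> finite V \<and> simple_graph V E"

definition is_walk :: "'a set \<Rightarrow> ('a \<Rightarrow> 'a \<Rightarrow> bool) \<Rightarrow> 'a list \<Rightarrow> 'a \<Rightarrow> 'a \<Rightarrow> bool" where
  "is_walk V E xs u v \<longleftrightarrow> xs \<noteq> [] \<and> set xs \<subseteq> V \<and> successively E xs \<and> hd xs = u \<and> last xs = v"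

definition connected_graph :: "'a set \<Rightarrow> ('a \<Rightarrow> 'a \<Rightarrow> bool) \<Rightarrow> bool" where
  "connected_graph V E \<longleftrightarrow> V \<noteq> {} \<and> (\<forall>u\<in>V. \<forall>v\<in>V. \<exists>xs. is_walk V E xs u v)"

definition is_cycle :: "'a set \<Rightarrow> ('a \<Rightarrow> 'a \<Rightarrow> bool) \<Rightarrow> 'a list \<Rightarrow> bool" where
  "is_cycle V E xs \<longleftrightarrow> length xs \<ge> 3 \<and> distinct xs \<and> set xs \<subseteq> V \<and> successively E xs
     \<and> E (last xs) (hd xs)"

definition is_tree :: "'a set \<Rightarrow> ('a \<Rightarrow> 'a \<Rightarrow> bool) \<Rightarrow> bool" where
  "is_tree V E \<longleftrightarrow> connected_graph V E \<and> \<not> (\<exists>xs. is_cycle V E xs)"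

definition gdist :: "'a set \<Rightarrow> ('a \<Rightarrow> 'a \<Rightarrow> bool) \<Rightarrow> 'a \<Rightarrow> 'a \<Rightarrow> nat" where
  "gdist V E u v = (LEAST n. \<exists>xs. is_walk V E xs u v \<and> length xs = Suc n)"

definition sphere :: "'a set \<Rightarrow> ('a \<Rightarrow> 'a \<Rightarrow> bool) \<Rightarrow> 'a \<Rightarrow> nat \<Rightarrow> 'a set" where
  "sphere V E v0 i = {v \<in> V. gdist V E v0 v = i}"

text \<open>Clusters: vertex sets of connected components of the induced subgraphs G[S^i].\<close>
definition clusters :: "'a set \<Rightarrow> ('a \<Rightarrow> 'a \<Rightarrow> bool) \<Rightarrow> 'a \<Rightarrow> 'a set set" where
  "clusters V E v0 = {C. \<exists>i. \<exists>v \<in> sphere V E v0 i.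
      C = {u. \<exists>xs. is_walk (sphere V E v0 i) E xs v u}}"

definition cluster_adj :: "('a \<Rightarrow> 'a \<Rightarrow> bool) \<Rightarrow> 'a set \<Rightarrow> 'a set \<Rightarrow> bool" where
  "cluster_adj E C C' \<longleftrightarrow> C \<noteq> C' \<and> (\<exists>v\<in>C. \<exists>v'\<in>C'. E v v')"

definition is_loop :: "'a set \<Rightarrow> ('a \<Rightarrow> 'a \<Rightarrow> bool) \<Rightarrow> 'a list \<Rightarrow> bool" where
  "is_loop V E xs \<longleftrightarrow> xs \<noteq> [] \<and> set xs \<subseteq> V \<and> successively (\<lambda>a b. a = b \<or> E a b) xs
     \<and> hd xs = last xs"

definition elem_reduction :: "('a \<Rightarrow> 'a \<Rightarrow> bool) \<Rightarrow> 'a list \<Rightarrow> 'a list \<Rightarrow> bool" where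
  "elem_reduction E xs ys \<longleftrightarrow> (\<exists>i. Suc i < length xs \<and> ys = take i xs @ drop (Suc i) xs \<and>
     (xs ! i = xs ! Suc i \<or>
      (0 < i \<and> (xs ! (i - 1) = xs ! Suc i \<or> E (xs ! (i - 1)) (xs ! Suc i)))))"

definition elem_homotopy :: "'a set \<Rightarrow> ('a \<Rightarrow> 'a \<Rightarrow> bool) \<Rightarrow> 'a list \<Rightarrow> 'a list \<Rightarrow> bool" where
  "elem_homotopy V E xs ys \<longleftrightarrow> is_loop V E xs \<and> is_loop V E ys \<and>
     (elem_reduction E xs ys \<or> elem_reduction E ys xs)"

definition contractible :: "'a set \<Rightarrow> ('a \<Rightarrow> 'a \<Rightarrow> bool) \<Rightarrow> 'a list \<Rightarrow> bool" where
  "contractible V E xs \<longleftrightarrow> (\<exists>v. (elem_homotopy V E)\<^sup>*\<^sup>* xs [v])"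

definition simply_connected :: "'a set \<Rightarrow> ('a \<Rightarrow> 'a \<Rightarrow> bool) \<Rightarrow> bool" where
  "simply_connected V E \<longleftrightarrow> (\<forall>xs. is_loop V E xs \<longrightarrow> contractible V E xs)"

end

theory Submission
  imports Defs
begin

text \<open>Fix two distinct clusters $A$ and $B$ and count, along a loop of $G$, the steps between a
  vertex of $A$ and a vertex of $B$. An elementary homotopy replaces two sides of a triangle
  of $G$ by the third (or removes a repeated vertex). The distances to $v_0$ of the corners
  of a triangle differ pairwise by at most one, so two adjacent corners lie in the same sphere,
  hence in the same cluster; therefore the parity of the count is a homotopy invariant. A cycle
  $A, B, \dots, A$ in the cluster graph lifts to a loop of $G$ with count one, which thus cannot
  be contracted to a constant loop. Connectedness of the cluster graph is inherited from $G$ by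
  projecting walks.\<close>

lemma is_walk_singleton: "x \<in> S \<Longrightarrow> is_walk S E [x] x x"
  by (simp add: is_walk_def)

lemma is_walk_append:
  "is_walk S E xs a b \<Longrightarrow> is_walk S E ys c d \<Longrightarrow> E b c \<Longrightarrow> is_walk S E (xs @ ys) a d"
  unfolding is_walk_def by (auto simp: successively_append_iff)

lemma is_walk_join:
  assumes "is_walk S E xs a b" "is_walk S E ys b d"
  shows "is_walk S E (xs @ tl ys) a d"
proof (cases "tl ys")
  case Nil
  then have "ys = [b]" using assms(2) unfolding is_walk_def by (cases ys) auto
  then show ?thesis using assms by (simp add: is_walk_def)
next
  case (Cons c r)
  then have ys: "ys = b # c # r" using assms(2) unfolding is_walk_def by (cases ys) auto
  then have "is_walk S E (c # r) c d" "E b c" using assms(2) unfolding is_walk_def by auto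
  then show ?thesis using is_walk_append[OF assms(1)] ys by auto
qed

lemma is_walk_rev:
  assumes "\<And>u v. E u v \<Longrightarrow> E v u" and "is_walk S E xs a b"
  shows "is_walk S E (rev xs) b a"
proof -
  have "successively (\<lambda>x y. E y x) xs"
    using assms(2) unfolding is_walk_def by (auto intro: successively_mono assms(1))
  then show ?thesis using assms(2) unfolding is_walk_def by (simp add: hd_rev last_rev)
qed

lemma is_walk_mono: "S \<subseteq> T \<Longrightarrow> is_walk S E xs a b \<Longrightarrow> is_walk T E xs a b"
  unfolding is_walk_def by auto

lemma is_walk_prefix:
  assumes "is_walk S E (p @ u # q) a b"
  shows "is_walk S E (p @ [u]) a u"
proof -
  have "successively E ((p @ [u]) @ q)" using assms unfolding is_walk_def by simp
  then have "successively E (p @ [u])" unfolding successively_append_iff by blast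
  then show ?thesis using assms unfolding is_walk_def by (cases p) auto
qed

lemma is_loop_if_is_walk: "is_walk V E xs c c \<Longrightarrow> is_loop V E xs"
  unfolding is_walk_def is_loop_def by (auto intro: successively_mono)

definition reachable :: "'a set \<Rightarrow> ('a \<Rightarrow> 'a \<Rightarrow> bool) \<Rightarrow> 'a \<Rightarrow> 'a \<Rightarrow> bool" where
  "reachable S E x y \<longleftrightarrow> (\<exists>xs. is_walk S E xs x y)"

lemma reachable_refl: "x \<in> S \<Longrightarrow> reachable S E x x"
  unfolding reachable_def by (blast intro: is_walk_singleton)

lemma reachable_trans: "reachable S E x y \<Longrightarrow> reachable S E y z \<Longrightarrow> reachable S E x z"
  unfolding reachable_def by (blast intro: is_walk_join)

lemma reachable_sym: "(\<And>u v. E u v \<Longrightarrow> E v u) \<Longrightarrow> reachable S E x y \<Longrightarrow> reachable S E y x"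
  unfolding reachable_def by (blast intro: is_walk_rev)

lemma reachable_edge: "x \<in> S \<Longrightarrow> y \<in> S \<Longrightarrow> E x y \<Longrightarrow> reachable S E x y"
  unfolding reachable_def by (rule exI[of _ "[x, y]"]) (simp add: is_walk_def)

lemma reachable_walk_vertex: "is_walk S E w a b \<Longrightarrow> u \<in> set w \<Longrightarrow> reachable S E a u"
  unfolding reachable_def by (metis split_list is_walk_prefix)

lemma reachable_in: "reachable S E x u \<Longrightarrow> x \<in> S \<and> u \<in> S"
  unfolding reachable_def is_walk_def by (metis hd_in_set last_in_set subsetD)

fun count_steps :: "('b \<Rightarrow> 'b \<Rightarrow> bool) \<Rightarrow> 'b list \<Rightarrow> nat" where
  "count_steps P (a # b # r) = (if P a b then 1 else 0) + count_steps P (b # r)"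
| "count_steps P _ = 0"

lemma count_steps_append_Cons:
  "count_steps P (pre @ a # r) = count_steps P (pre @ [a]) + count_steps P (a # r)"
  by (induction pre rule: induct_list012) auto

lemma count_steps_append:
  assumes "xs \<noteq> []" "ys \<noteq> []"
  shows "count_steps P (xs @ ys)
    = count_steps P xs + (if P (last xs) (hd ys) then 1 else 0) + count_steps P ys"
proof -
  obtain pre a where "xs = pre @ [a]" using assms(1) by (cases xs rule: rev_cases) auto
  moreover obtain b r where "ys = b # r" using assms(2) by (cases ys) auto
  ultimately show ?thesis using count_steps_append_Cons[of P pre a ys] by simp
qed

lemma count_steps_eq_0:
  "(\<And>a b. a \<in> set xs \<Longrightarrow> b \<in> set xs \<Longrightarrow> \<not> P a b) \<Longrightarrow> count_steps P xs = 0"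
  by (induction P xs rule: count_steps.induct) auto

lemma count_steps_closed_cycle:
  assumes "distinct (A # B # rest)" "rest \<noteq> []"
  shows "count_steps (\<lambda>X Y. {X, Y} = {A, B}) (A # B # rest @ [A]) = 1"
proof -
  obtain r rest' where rest: "rest = r # rest'" using assms(2) by (cases rest) auto
  have "count_steps (\<lambda>X Y. {X, Y} = {A, B}) (rest @ [A]) = 0"
    using assms(1) by (intro count_steps_eq_0) (auto simp: doubleton_eq_iff)
  then show ?thesis using assms(1) rest by (auto simp: doubleton_eq_iff)
qed

lemma even_indicator_degenerate_triangle:
  assumes "A \<noteq> B" "X = Y \<or> Y = Z \<or> X = Z"
  shows "even ((if {X, Y} = {A, B} then 1 else 0) + (if {Y, Z} = {A, B} then 1 else 0) + (k::nat))
     \<longleftrightarrow> even ((if {X, Z} = {A, B} then 1 else 0) + k)"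
  using assms by (auto simp: doubleton_eq_iff)

lemma even_count_steps_elem_reduction:
  fixes f :: "'a \<Rightarrow> 'b"
  assumes AB: "A \<noteq> B" and loop: "is_loop V E xs" and red: "elem_reduction E xs ys"
    and degenerate: "\<And>x y z. x \<in> V \<Longrightarrow> y \<in> V \<Longrightarrow> z \<in> V \<Longrightarrow>
      x = y \<or> E x y \<Longrightarrow> y = z \<or> E y z \<Longrightarrow> x = z \<or> E x z \<Longrightarrow>
      f x = f y \<or> f y = f z \<or> f x = f z"
  shows "even (count_steps (\<lambda>a b. {f a, f b} = {A, B}) xs)
    \<longleftrightarrow> even (count_steps (\<lambda>a b. {f a, f b} = {A, B}) ys)"
proof -
  let ?P = "\<lambda>a b. {f a, f b} = {A, B}"
  obtain i where i: "Suc i < length xs" and ys: "ys = take i xs @ drop (Suc i) xs"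
    and cond: "xs ! i = xs ! Suc i \<or>
      (0 < i \<and> (xs ! (i - 1) = xs ! Suc i \<or> E (xs ! (i - 1)) (xs ! Suc i)))"
    using red unfolding elem_reduction_def by blast
  define a b post where "a = xs ! i" and "b = xs ! Suc i" and "post = drop (Suc (Suc i)) xs"
  have drop: "drop i xs = a # b # post"
    unfolding a_def b_def post_def using i by (simp add: Cons_nth_drop_Suc)
  then have xs: "xs = take i xs @ a # b # post" by (metis append_take_drop_id)
  have "drop (Suc i) xs = b # post"
    unfolding b_def post_def using i by (simp add: Cons_nth_drop_Suc)
  then have ys': "ys = take i xs @ b # post" using ys by simp
  show ?thesis
  proof (cases "a = b")
    case True
    then show ?thesis
      using count_steps_append_Cons[of ?P "take i xs" a "b # post"]
        count_steps_append_Cons[of ?P "take i xs" b post] xs ys' AB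
      by auto
  next
    case False
    define p pre where "p = xs ! (i - 1)" and "pre = take (i - 1) xs"
    have i0: "0 < i" and pb: "p = b \<or> E p b"
      using cond False unfolding a_def b_def p_def by auto
    have "take i xs = pre @ [p]" unfolding pre_def p_def using i i0
      by (metis Suc_diff_1 Suc_lessD less_trans_Suc take_Suc_conv_app_nth lessI)
    then have xs2: "xs = pre @ p # a # b # post" and ys2: "ys = pre @ p # b # post"
      using xs ys' by simp_all
    have "successively (\<lambda>a b. a = b \<or> E a b) (pre @ p # a # b # post)"
      using loop xs2 unfolding is_loop_def by simp
    then have pa: "p = a \<or> E p a" and ab: "a = b \<or> E a b"
      by (auto simp: successively_append_iff)
    have "p \<in> V" "a \<in> V" "b \<in> V" using loop xs2 unfolding is_loop_def by auto
    then have "f p = f a \<or> f a = f b \<or> f p = f b" using degenerate pa ab pb by blast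
    from even_indicator_degenerate_triangle[OF AB this, of "count_steps ?P (b # post)"]
    have "even (count_steps ?P (pre @ [p]) + count_steps ?P (p # a # b # post))
      \<longleftrightarrow> even (count_steps ?P (pre @ [p]) + count_steps ?P (p # b # post))"
      by (simp only: count_steps.simps even_add) blast
    then show ?thesis
      unfolding xs2 ys2 count_steps_append_Cons[of ?P pre p "a # b # post"]
        count_steps_append_Cons[of ?P pre p "b # post"] .
  qed
qed

lemma even_count_steps_homotopic:
  fixes f :: "'a \<Rightarrow> 'b"
  assumes AB: "A \<noteq> B" and hom: "(elem_homotopy V E)\<^sup>*\<^sup>* xs ys"
    and degenerate: "\<And>x y z. x \<in> V \<Longrightarrow> y \<in> V \<Longrightarrow> z \<in> V \<Longrightarrow>
      x = y \<or> E x y \<Longrightarrow> y = z \<or> E y z \<Longrightarrow> x = z \<or> E x z \<Longrightarrow>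
      f x = f y \<or> f y = f z \<or> f x = f z"
  shows "even (count_steps (\<lambda>a b. {f a, f b} = {A, B}) xs)
    \<longleftrightarrow> even (count_steps (\<lambda>a b. {f a, f b} = {A, B}) ys)"
  using hom
proof (induction rule: rtranclp_induct)
  case (step y z)
  have "is_loop V E y" "is_loop V E z" "elem_reduction E y z \<or> elem_reduction E z y"
    using step.hyps(2) unfolding elem_homotopy_def by auto
  then show ?case
    using step.IH even_count_steps_elem_reduction[where V = V and E = E and f = f, OF AB _ _ degenerate]
    by blast
qed simp

locale rooted_connected_graph =
  fixes V :: "'a set" and E :: "'a \<Rightarrow> 'a \<Rightarrow> bool" and v0 :: 'a
  assumes simple: "simple_graph V E" and connected: "connected_graph V E" and root: "v0 \<in> V"
begin

abbreviation level :: "'a \<Rightarrow> nat" where "level v \<equiv> gdist V E v0 v"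

lemma edge_sym: "E u v \<Longrightarrow> E v u"
  using simple unfolding simple_graph_def by blast

lemma edge_in_V: "E u v \<Longrightarrow> u \<in> V \<and> v \<in> V"
  using simple unfolding simple_graph_def by blast

lemma shortest_walk:
  assumes "v \<in> V" shows "\<exists>xs. is_walk V E xs v0 v \<and> length xs = Suc (level v)"
proof -
  obtain xs where "is_walk V E xs v0 v"
    using connected assms root unfolding connected_graph_def by blast
  then have "\<exists>n xs. is_walk V E xs v0 v \<and> length xs = Suc n"
    unfolding is_walk_def by (metis Suc_pred length_greater_0_conv)
  from LeastI_ex[OF this] show ?thesis unfolding gdist_def .
qed

lemma level_edge_le:
  assumes "E u v" shows "level v \<le> Suc (level u)"
proof -
  obtain xs where w: "is_walk V E xs v0 u" and l: "length xs = Suc (level u)"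
    using shortest_walk edge_in_V[OF assms] by blast
  have "is_walk V E [v] v v" using edge_in_V[OF assms] by (simp add: is_walk_singleton)
  from is_walk_append[OF w this assms] l
  have "\<exists>ys. is_walk V E ys v0 v \<and> length ys = Suc (Suc (level u))" by auto
  then show ?thesis unfolding gdist_def by (rule Least_le)
qed

definition cluster_of :: "'a \<Rightarrow> 'a set" where
  "cluster_of x = {u. reachable (sphere V E v0 (level x)) E x u}"

lemma in_sphere_level: "x \<in> V \<Longrightarrow> x \<in> sphere V E v0 (level x)"
  unfolding sphere_def by simp

lemma clusters_eq_image: "clusters V E v0 = cluster_of ` V"
  unfolding clusters_def cluster_of_def reachable_def sphere_def by auto

lemma cluster_of_self: "x \<in> V \<Longrightarrow> x \<in> cluster_of x"
  unfolding cluster_of_def using reachable_refl[OF in_sphere_level] by blast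

lemma in_cluster_ofD: "u \<in> cluster_of x \<Longrightarrow> u \<in> V \<and> level u = level x"
  unfolding cluster_of_def sphere_def using reachable_in by fastforce

lemma cluster_of_eq:
  assumes "u \<in> cluster_of x" shows "cluster_of u = cluster_of x"
proof -
  let ?S = "sphere V E v0 (level x)"
  have xu: "reachable ?S E x u" using assms unfolding cluster_of_def by simp
  then have ux: "reachable ?S E u x" using reachable_sym[where E = E] edge_sym by blast
  have "reachable ?S E u w \<longleftrightarrow> reachable ?S E x w" for w
    using reachable_trans[OF xu] reachable_trans[OF ux] by blast
  then show ?thesis using in_cluster_ofD[OF assms] unfolding cluster_of_def by auto
qed

lemma cluster_of_member: "C \<in> cluster_of ` V \<Longrightarrow> u \<in> C \<Longrightarrow> cluster_of u = C"
  using cluster_of_eq by blast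

lemma cluster_of_eq_edge:
  assumes "E x y" "level x = level y" shows "cluster_of x = cluster_of y"
proof -
  have "reachable (sphere V E v0 (level x)) E x y"
    using assms edge_in_V[OF assms(1)] unfolding sphere_def by (intro reachable_edge) auto
  then have "y \<in> cluster_of x" unfolding cluster_of_def by simp
  then show ?thesis by (simp add: cluster_of_eq)
qed

lemma cluster_adj_cluster_of:
  assumes "E x y" "cluster_of x \<noteq> cluster_of y"
  shows "cluster_adj E (cluster_of x) (cluster_of y)"
  using assms edge_in_V cluster_of_self unfolding cluster_adj_def by blast

lemma triangle_cluster_degenerate:
  assumes "x = y \<or> E x y" "y = z \<or> E y z" "x = z \<or> E x z"
  shows "cluster_of x = cluster_of y \<or> cluster_of y = cluster_of z \<or> cluster_of x = cluster_of z"
proof -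
  have close: "u = v \<or> E u v \<Longrightarrow> level v \<le> Suc (level u) \<and> level u \<le> Suc (level v)" for u v
    using level_edge_le edge_sym by auto
  have "level x = level y \<or> level y = level z \<or> level x = level z"
    using close[OF assms(1)] close[OF assms(2)] close[OF assms(3)] by linarith
  then show ?thesis using assms cluster_of_eq_edge by metis
qed

lemma cluster_walk_of_walk:
  "is_walk V E w x y \<Longrightarrow>
    \<exists>cs. is_walk (cluster_of ` V) (cluster_adj E) cs (cluster_of x) (cluster_of y)"
proof (induction w arbitrary: x)
  case (Cons a w)
  then have a: "a = x" "a \<in> V" unfolding is_walk_def by auto
  then have single:
      "is_walk (cluster_of ` V) (cluster_adj E) [cluster_of a] (cluster_of x) (cluster_of a)"
    by (simp add: is_walk_singleton)
  show ?case
  proof (cases w)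
    case Nil
    then have "y = a" using Cons.prems unfolding is_walk_def by auto
    then show ?thesis using single by blast
  next
    case (Cons b w')
    with Cons.prems have e: "E a b" and "is_walk V E w b y" unfolding is_walk_def by auto
    then obtain cs
      where cs: "is_walk (cluster_of ` V) (cluster_adj E) cs (cluster_of b) (cluster_of y)"
      using Cons.IH by blast
    show ?thesis
    proof (cases "cluster_of a = cluster_of b")
      case True
      then show ?thesis using cs a(1) by auto
    next
      case False
      from is_walk_append[OF single cs cluster_adj_cluster_of[OF e False]] show ?thesis by blast
    qed
  qed
qed (simp add: is_walk_def)

lemma walk_in_cluster:
  assumes "x \<in> V" "y \<in> cluster_of x"
  shows "\<exists>w. is_walk V E w x y \<and> (\<forall>u\<in>set w. cluster_of u = cluster_of x)"
proof -
  obtain w where w: "is_walk (sphere V E v0 (level x)) E w x y"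
    using assms(2) unfolding cluster_of_def reachable_def by blast
  have "u \<in> cluster_of x" if "u \<in> set w" for u
    using reachable_walk_vertex[OF w that] unfolding cluster_of_def by simp
  then show ?thesis using is_walk_mono[OF _ w] cluster_of_eq unfolding sphere_def by blast
qed

lemma lift_cluster_walk:
  assumes "\<And>X. \<not> Q X X"
  shows "cs \<noteq> [] \<Longrightarrow> set cs \<subseteq> cluster_of ` V \<Longrightarrow> successively (cluster_adj E) cs \<Longrightarrow>
    x \<in> hd cs \<Longrightarrow> y \<in> last cs \<Longrightarrow>
    \<exists>xs. is_walk V E xs x y
      \<and> count_steps (\<lambda>a b. Q (cluster_of a) (cluster_of b)) xs = count_steps Q cs"
proof (induction cs arbitrary: x)
  case (Cons C cs)
  note IH = Cons.IH and prems = Cons.prems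
  let ?lift = "count_steps (\<lambda>a b. Q (cluster_of a) (cluster_of b))"
  have C: "C \<in> cluster_of ` V" and x: "x \<in> C" using prems by auto
  then have clx: "cluster_of x = C" by (rule cluster_of_member)
  then have "x \<in> V" using in_cluster_ofD x by blast
  have walk_C: "\<exists>w. is_walk V E w x v \<and> ?lift w = 0" if v: "v \<in> C" for v
  proof -
    obtain w where w: "is_walk V E w x v" and in_C: "\<forall>u\<in>set w. cluster_of u = C"
      using walk_in_cluster[OF \<open>x \<in> V\<close>, of v] v clx by auto
    have "?lift w = 0" by (rule count_steps_eq_0) (simp add: in_C assms)
    with w show ?thesis by blast
  qed
  show ?case
  proof (cases cs)
    case Nil
    then have "y \<in> C" using prems by simp
    then show ?thesis using walk_C Nil by simp
  next
    case (Cons D cs')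
    with prems obtain v v' where v: "v \<in> C" "v' \<in> D" "E v v'"
      unfolding cluster_adj_def by auto
    obtain w1 where w1: "is_walk V E w1 x v" and ct1: "?lift w1 = 0"
      using walk_C[OF v(1)] by blast
    have "\<exists>xs. is_walk V E xs v' y \<and> ?lift xs = count_steps Q cs"
      by (rule IH) (use prems Cons v(2) in auto)
    then obtain w2 where w2: "is_walk V E w2 v' y" and ct2: "?lift w2 = count_steps Q cs"
      by blast
    have D: "D \<in> cluster_of ` V" using prems Cons by simp
    have "cluster_of v = C" "cluster_of v' = D"
      using cluster_of_member[OF C v(1)] cluster_of_member[OF D v(2)] .
    moreover have "w1 \<noteq> []" "last w1 = v" "w2 \<noteq> []" "hd w2 = v'"
      using w1 w2 unfolding is_walk_def by auto
    ultimately have "?lift (w1 @ w2) = count_steps Q (C # cs)"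
      using count_steps_append[of w1 w2] ct1 ct2 Cons by simp
    then show ?thesis using is_walk_append[OF w1 w2 v(3)] by blast
  qed
qed simp

lemma connected_cluster_graph: "connected_graph (cluster_of ` V) (cluster_adj E)"
  unfolding connected_graph_def
proof (intro conjI ballI)
  show "cluster_of ` V \<noteq> {}" using root by blast
next
  fix C C' assume "C \<in> cluster_of ` V" "C' \<in> cluster_of ` V"
  then obtain x y where "x \<in> V" "y \<in> V" "C = cluster_of x" "C' = cluster_of y" by blast
  with connected cluster_walk_of_walk
  show "\<exists>cs. is_walk (cluster_of ` V) (cluster_adj E) cs C C'"
    unfolding connected_graph_def by blast
qed

lemma acyclic_cluster_graph:
  assumes "simply_connected V E"
  shows "\<not> is_cycle (cluster_of ` V) (cluster_adj E) cs"
proof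
  assume "is_cycle (cluster_of ` V) (cluster_adj E) cs"
  then have len: "length cs \<ge> 3" and distinct: "distinct cs" and sub: "set cs \<subseteq> cluster_of ` V"
    and succ: "successively (cluster_adj E) cs" and close: "cluster_adj E (last cs) (hd cs)"
    unfolding is_cycle_def by auto
  obtain A B r rest' where cs: "cs = A # B # r # rest'"
    using len by (cases cs; cases "tl cs"; cases "tl (tl cs)") auto
  have closed: "successively (cluster_adj E) (cs @ [A])"
    using succ close unfolding successively_append_iff by (simp add: cs)
  let ?Q = "\<lambda>X Y. {X, Y} = {A, B}"
  have AB: "A \<noteq> B" using distinct cs by auto
  have irr: "\<not> ?Q X X" for X using AB by (auto simp: doubleton_eq_iff)
  obtain c where "c \<in> V" "A = cluster_of c" using sub cs by auto
  then have "c \<in> A" using cluster_of_self by simp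
  have "\<exists>xs. is_walk V E xs c c
      \<and> count_steps (\<lambda>a b. ?Q (cluster_of a) (cluster_of b)) xs = count_steps ?Q (cs @ [A])"
    by (rule lift_cluster_walk[OF irr]) (use sub closed \<open>c \<in> A\<close> cs in auto)
  then obtain xs where walk: "is_walk V E xs c c"
    and ct: "count_steps (\<lambda>a b. ?Q (cluster_of a) (cluster_of b)) xs = count_steps ?Q (cs @ [A])"
    by blast
  obtain v where hom: "(elem_homotopy V E)\<^sup>*\<^sup>* xs [v]"
    using assms is_loop_if_is_walk[OF walk] unfolding simply_connected_def contractible_def by blast
  have "even (count_steps (\<lambda>a b. ?Q (cluster_of a) (cluster_of b)) xs)
    \<longleftrightarrow> even (count_steps (\<lambda>a b. ?Q (cluster_of a) (cluster_of b)) [v])"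
    by (rule even_count_steps_homotopic[OF AB hom]) (rule triangle_cluster_degenerate)
  then have "even (count_steps ?Q (cs @ [A]))" using ct by simp
  moreover have "count_steps ?Q (cs @ [A]) = 1"
    using count_steps_closed_cycle[of A B "r # rest'"] distinct cs by simp
  ultimately show False by simp
qed

end

theorem mainTheorem3:
  fixes V :: "'a set" and E :: "'a \<Rightarrow> 'a \<Rightarrow> bool" and v0 :: 'a
  assumes "finite_simple_graph V E"
    and "connected_graph V E"
    and "simply_connected V E"
    and "v0 \<in> V"
  shows "is_tree (clusters V E v0) (cluster_adj E)"
proof -
  interpret rooted_connected_graph V E v0
    using assms unfolding finite_simple_graph_def by unfold_locales auto
  show ?thesis
    unfolding is_tree_def clusters_eq_image
    using connected_cluster_graph acyclic_cluster_graph[OF assms(3)] by blast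
qed

end
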